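(* Let $\mathcal C$ be a clustering problem satisfying Assumption 1, $P\in\Lambda$ with $p_{\min}=\min_{i\in[K]}\min_{a\in\mathcal X}P_i(a)>0$, and $\sigma'\in\mathcal C\setminus\{\sigma_P\}$. Then for all $\gamma\in(0,1/K)$, $$C_{g_P^{\sigma'}}(\Sigma_K^\gamma)\le\frac D\gamma,\qquad D=\Big(\max_{\sigma''\in\mathcal C}\max_{m\in[M_{\sigma''}]}|\mathcal A_m^{\sigma''}|\Big)\frac{|\mathcal X|(1-p_{\min})}{4p_{\min}}.$$
   Context: Framework. Let $\mathcal X$ be a finite alphabet with $|\mathcal X|\ge2$, $\mathcal P(\mathcal X)$ the set of probability distributions on $\mathcal X$, and $K\ge2$ an integer (number of arms); $[n]=\{1,\dots,n\}$. A hypothesis is a collection $\sigma=\{\mathcal A_1^\sigma,\dots,\mathcal A_{M_\sigma}^\sigma\}$ ($M_\sigma\ge1$) of pairwise disjoint subsets of $[K]$, each of cardinality at least 2 (clusters); let $\mathcal A^\sigma_{M_\sigma+1}=[K]\setminus\bigcup_{m\le M_\sigma}\mathcal A_m^\sigma$. $\Lambda_\sigma$ is the set of $P\in\mathcal P(\mathcal X)^K$ with $P_i=P_j$ whenever $i,j\in\mathcal A_m^\sigma$ for some $m\le M_\sigma$, and $P_i\neq P_j$ whenever $i\in\mathcal A_{m_1}^\sigma$, $j\in\mathcal A_{m_2}^\sigma$ with $m_1\ne m_2\in[M_\sigma+1]$. A clustering problem is a finite set $\mathcal C$ of hypotheses with $|\mathcal C|\ge2$; $\Lambda=\bigcup_{\sigma\in\mathcal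 C}\Lambda_\sigma$. Hypothesis $\sigma$ dominates $\sigma'$ if every cluster of $\sigma$ is a subset of some cluster of $\sigma'$. Assumption 1: (i) there is no pair $\sigma\neq\sigma'$ in $\mathcal C$ such that $\sigma$ dominates $\sigma'$; (ii) every $P\in\Lambda$ belongs to $\Lambda_\sigma$ for exactly one $\sigma\in\mathcal C$, denoted $\sigma_P$. Functions. $D(P\|Q)$ is the KL divergence. $\Sigma_K=\{w\in\mathbb R^K: w_i\ge0,\sum_iw_i=1\}$, $\Sigma_K^\gamma=\{w\in\Sigma_K:w_i\ge\gamma\ \forall i\}$. For $\mathcal A\subseteq[K]$, $G(P_{\mathcal A},w_{\mathcal A})=0$ if $w_i=0$ for all $i\in\mathcal A$, and otherwise $G(P_{\mathcal A},w_{\mathcal A})=\sum_{i\in\mathcal A}w_iD(P_i\|W)$ with $W=\sum_{i\in\mathcal A}w_iP_i/\sum_{i\in\mathcal A}w_i$. For $\sigma\in\mathcal C$, $g_P^\sigma(w)=\sum_{m=1}^{M_\sigma}G(P_{\mathcal A_m^\sigma},w_{\mathcal A_m^\sigma})$ (a concave differentiable function on $\Sigma_K^\gamma$). For a concave differentiable $f$ on a compact convex set $\mathcal A$, the curvature constant is $$C_f(\mathcal A)=\sup_{x,z\in\mathcal A,\ \alpha\in(0,1],\ y=x+\alpha(z-x)}\frac1{\alpha^2}\big(f(x)-f(y)+\langle y-x,\nabla f(x)\rangle\big).$$ *)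

theory Defs
  imports "HOL-Analysis.Analysis"
begin

text \<open>Arms: the finite type 'k (so [K] = UNIV :: 'k set, K = CARD('k)).
  Alphabet: the finite type 'a. Distributions on the alphabet: functions 'a \<Rightarrow> real.\<close>

definition is_distr :: "('a::finite \<Rightarrow> real) \<Rightarrow> bool" where
  "is_distr p \<longleftrightarrow> (\<forall>a. p a \<ge> 0) \<and> (\<Sum>a\<in>UNIV. p a) = 1"

definition KL :: "('a::finite \<Rightarrow> real) \<Rightarrow> ('a \<Rightarrow> real) \<Rightarrow> real" where
  "KL p q = (\<Sum>a\<in>UNIV. if p a = 0 then 0 else p a * ln (p a / q a))"

definition is_hypothesis :: "'k set set \<Rightarrow> bool" where
  "is_hypothesis \<sigma> \<longleftrightarrow> \<sigma> \<noteq> {} \<and>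
     (\<forall>A\<in>\<sigma>. \<forall>B\<in>\<sigma>. A \<noteq> B \<longrightarrow> A \<inter> B = {}) \<and>
     (\<forall>A\<in>\<sigma>. finite A \<and> card A \<ge> 2)"

text \<open>The blocks A_1,...,A_M together with the remainder A_{M+1}.\<close>
definition blocks :: "'k set set \<Rightarrow> 'k set set" where
  "blocks \<sigma> = insert (UNIV - \<Union>\<sigma>) \<sigma>"

definition in_Lambda :: "'k set set \<Rightarrow> ('k \<Rightarrow> 'a::finite \<Rightarrow> real) \<Rightarrow> bool" where
  "in_Lambda \<sigma> P \<longleftrightarrow> (\<forall>i. is_distr (P i)) \<and>
     (\<forall>A\<in>\<sigma>. \<forall>i\<in>A. \<forall>j\<in>A. P i = P j) \<and>
     (\<forall>B1\<in>blocks \<sigma>. \<forall>B2\<in>blocks \<sigma>. B1 \<noteq> B2 \<longrightarrow> (\<forall>i\<in>B1. \<forall>j\<in>B2. P i \<noteq> P j))"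

definition dominates :: "'k set set \<Rightarrow> 'k set set \<Rightarrow> bool" where
  "dominates \<sigma> \<sigma>' \<longleftrightarrow> (\<forall>A\<in>\<sigma>. \<exists>B\<in>\<sigma>'. A \<subseteq> B)"

definition clustering_problem :: "'k set set set \<Rightarrow> bool" where
  "clustering_problem C \<longleftrightarrow> finite C \<and> card C \<ge> 2 \<and> (\<forall>\<sigma>\<in>C. is_hypothesis \<sigma>)"

definition in_Lambda_C :: "'k set set set \<Rightarrow> ('k \<Rightarrow> 'a::finite \<Rightarrow> real) \<Rightarrow> bool" where
  "in_Lambda_C C P \<longleftrightarrow> (\<exists>\<sigma>\<in>C. in_Lambda \<sigma> P)"

definition assumption1 :: "'k set set set \<Rightarrow> ('a::finite) itself \<Rightarrow> bool" where
  "assumption1 C _ \<longleftrightarrow>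
     (\<nexists>\<sigma> \<sigma>'. \<sigma> \<in> C \<and> \<sigma>' \<in> C \<and> \<sigma> \<noteq> \<sigma>' \<and> dominates \<sigma> \<sigma>') \<and>
     (\<forall>P::'k \<Rightarrow> 'a \<Rightarrow> real. in_Lambda_C C P \<longrightarrow> (\<exists>!\<sigma>. \<sigma> \<in> C \<and> in_Lambda \<sigma> P))"

definition sigma_of :: "'k set set set \<Rightarrow> ('k \<Rightarrow> 'a::finite \<Rightarrow> real) \<Rightarrow> 'k set set" where
  "sigma_of C P = (THE \<sigma>. \<sigma> \<in> C \<and> in_Lambda \<sigma> P)"

definition simplex_gamma :: "real \<Rightarrow> (real ^ 'k::finite) set" where
  "simplex_gamma \<gamma> = {w. (\<forall>i. w $ i \<ge> \<gamma>) \<and> (\<Sum>i\<in>UNIV. w $ i) = 1}"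

definition Gfun :: "('k::finite \<Rightarrow> 'a::finite \<Rightarrow> real) \<Rightarrow> 'k set \<Rightarrow> real ^ 'k \<Rightarrow> real" where
  "Gfun P A w = (if (\<forall>i\<in>A. w $ i = 0) then 0 else
     (let W = (\<lambda>a. (\<Sum>j\<in>A. w $ j * P j a) / (\<Sum>j\<in>A. w $ j))
      in \<Sum>i\<in>A. w $ i * KL (P i) W))"

definition gfun :: "('k::finite \<Rightarrow> 'a::finite \<Rightarrow> real) \<Rightarrow> 'k set set \<Rightarrow> real ^ 'k \<Rightarrow> real" where
  "gfun P \<sigma> w = (\<Sum>A\<in>\<sigma>. Gfun P A w)"

definition curvature :: "(real ^ 'k::finite \<Rightarrow> real) \<Rightarrow> (real ^ 'k) set \<Rightarrow> ereal" where
  "curvature f S = (SUP (x, z, \<alpha>) \<in> {(x, z, \<alpha>). x \<in> S \<and> z \<in> S \<and> 0 < \<alpha> \<and> \<alpha> \<le> (1::real)}.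
      (let y = x + \<alpha> *\<^sub>R (z - x) in
        ereal ((f x - f y + frechet_derivative f (at x) (y - x)) / \<alpha>\<^sup>2)))"

definition p_min :: "('k::finite \<Rightarrow> 'a::finite \<Rightarrow> real) \<Rightarrow> real" where
  "p_min P = Min {P i a | i a. True}"

definition D_const :: "'k set set set \<Rightarrow> ('k::finite \<Rightarrow> 'a::finite \<Rightarrow> real) \<Rightarrow> real" where
  "D_const C P = real (Max {card A | A \<sigma>''. \<sigma>'' \<in> C \<and> A \<in> \<sigma>''}) *
      (real CARD('a) * (1 - p_min P) / (4 * p_min P))"

end

theory Submission
  imports Defs
begin

text \<open>For positive weights, with mixtures \<open>L\<^sub>a(w) = \<Sum>\<^sub>j w\<^sub>j P\<^sub>j(a)\<close> and block weight \<open>S(w) = \<Sum>\<^sub>j w\<^sub>j\<close>,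
  a block term is \<open>G(w) = \<Sum>\<^sub>i w\<^sub>i \<Sum>\<^sub>a P\<^sub>i(a) ln P\<^sub>i(a) - \<Sum>\<^sub>a L\<^sub>a ln L\<^sub>a + S ln S\<close>. Its linearisation
  gap between \<open>x\<close> and \<open>y = x + \<alpha> d\<close> is \<open>\<Sum>\<^sub>a L\<^sub>a(y) ln (L\<^sub>a(y) S(x) / (L\<^sub>a(x) S(y)))\<close>, which
  \<open>ln t \<le> t - 1\<close> bounds by the chi-square quantity \<open>\<alpha>\<^sup>2 S(x) \<Sum>\<^sub>a L\<^sub>a(d)\<^sup>2 / L\<^sub>a(x) / S(y)\<close>.
  Cauchy-Schwarz together with \<open>p\<^sub>m\<^sub>i\<^sub>n \<le> P\<^sub>j(a) \<le> 1 - p\<^sub>m\<^sub>i\<^sub>n\<close> reduces this to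
  \<open>\<alpha>\<^sup>2 (1 - p\<^sub>m\<^sub>i\<^sub>n) / p\<^sub>m\<^sub>i\<^sub>n \<Sum>\<^sub>j d\<^sub>j\<^sup>2 / y\<^sub>j\<close>, and on \<open>\<Sigma>\<^sub>K\<^sup>\<gamma>\<close> the last sum is at most \<open>1/\<gamma>\<close>.
  This gives the curvature bound with constant \<open>(1 - p\<^sub>m\<^sub>i\<^sub>n) / p\<^sub>m\<^sub>i\<^sub>n \<le> D\<close>.\<close>

definition mixture :: "('k::finite \<Rightarrow> 'a::finite \<Rightarrow> real) \<Rightarrow> 'k set \<Rightarrow> 'a \<Rightarrow> real^'k \<Rightarrow> real" where
  "mixture P A a w = (\<Sum>j\<in>A. w$j * P j a)"

definition block_weight :: "'k set \<Rightarrow> real^'k::finite \<Rightarrow> real" where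
  "block_weight A w = (\<Sum>j\<in>A. w$j)"

definition neg_entropy :: "('a::finite \<Rightarrow> real) \<Rightarrow> real" where
  "neg_entropy q = (\<Sum>a\<in>UNIV. q a * ln (q a))"

definition G_pos :: "('k::finite \<Rightarrow> 'a::finite \<Rightarrow> real) \<Rightarrow> 'k set \<Rightarrow> real^'k \<Rightarrow> real" where
  "G_pos P A w = (\<Sum>i\<in>A. w$i * neg_entropy (P i))
     - (\<Sum>a\<in>UNIV. mixture P A a w * ln (mixture P A a w)) + block_weight A w * ln (block_weight A w)"

definition G_pos_deriv :: "('k::finite \<Rightarrow> 'a::finite \<Rightarrow> real) \<Rightarrow> 'k set \<Rightarrow> real^'k \<Rightarrow> real^'k \<Rightarrow> real" where
  "G_pos_deriv P A x h = (\<Sum>i\<in>A. h$i * neg_entropy (P i))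
     - (\<Sum>a\<in>UNIV. (ln (mixture P A a x) + 1) * mixture P A a h)
     + (ln (block_weight A x) + 1) * block_weight A h"

lemma mixture_pos:
  assumes "\<forall>j a. 0 < P j a" and "A \<noteq> {}" and "\<forall>j\<in>A. 0 < w$j"
  shows "0 < mixture P A a w"
  unfolding mixture_def using assms by (intro sum_pos) auto

lemma block_weight_pos:
  assumes "A \<noteq> {}" and "\<forall>j\<in>A. 0 < w$j"
  shows "0 < block_weight A w"
  unfolding block_weight_def using assms by (intro sum_pos) auto

lemma sum_mixture:
  assumes "\<forall>j. (\<Sum>a\<in>UNIV. P j a) = 1"
  shows "(\<Sum>a\<in>UNIV. mixture P A a w) = block_weight A w"
  unfolding mixture_def block_weight_def
  by (subst sum.swap) (simp add: sum_distrib_left[symmetric] assms)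

lemma bounded_linear_mixture: "bounded_linear (mixture P A a)"
  unfolding mixture_def by (intro bounded_linear_sum bounded_linear_mult_const bounded_linear_vec_nth)

lemma bounded_linear_block_weight: "bounded_linear (block_weight A)"
  unfolding block_weight_def by (intro bounded_linear_sum bounded_linear_vec_nth)

lemmas linear_simps_mixture_block_weight =
  linear_add[OF bounded_linear.linear[OF bounded_linear_mixture]]
  linear_diff[OF bounded_linear.linear[OF bounded_linear_mixture]]
  linear_scale[OF bounded_linear.linear[OF bounded_linear_mixture]]
  linear_add[OF bounded_linear.linear[OF bounded_linear_block_weight]]
  linear_diff[OF bounded_linear.linear[OF bounded_linear_block_weight]]
  linear_scale[OF bounded_linear.linear[OF bounded_linear_block_weight]]

lemma Gfun_eq_G_pos:
  assumes pos: "\<forall>j a. 0 < P j a" and sum1: "\<forall>j. (\<Sum>a\<in>UNIV. P j a) = 1"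
    and ne: "A \<noteq> {}" and wpos: "\<forall>j\<in>A. 0 < w$j"
  shows "Gfun P A w = G_pos P A w"
proof -
  define S where "S = block_weight A w"
  define L where "L a = mixture P A a w" for a
  have S: "0 < S" unfolding S_def using block_weight_pos ne wpos by blast
  have L: "0 < L a" for a unfolding L_def using mixture_pos pos ne wpos by blast
  have KL_eq: "KL (P i) (\<lambda>a. L a / S) = neg_entropy (P i) - (\<Sum>a\<in>UNIV. P i a * ln (L a)) + ln S" for i
  proof -
    have "KL (P i) (\<lambda>a. L a / S) = (\<Sum>a\<in>UNIV. P i a * ln (P i a) - P i a * ln (L a) + P i a * ln S)"
      unfolding KL_def
    proof (intro sum.cong refl)
      fix a
      have "0 < P i a" using pos by auto
      moreover have "ln (P i a / (L a / S)) = ln (P i a) - ln (L a) + ln S"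
        using \<open>0 < P i a\<close> L[of a] S by (simp add: ln_div ln_mult)
      ultimately show "(if P i a = 0 then 0 else P i a * ln (P i a / (L a / S))) =
          P i a * ln (P i a) - P i a * ln (L a) + P i a * ln S"
        by (simp add: ring_distribs)
    qed
    also have "\<dots> = neg_entropy (P i) - (\<Sum>a\<in>UNIV. P i a * ln (L a)) + ln S"
      by (simp add: sum.distrib sum_subtractf neg_entropy_def sum_distrib_right[symmetric] sum1)
    finally show ?thesis .
  qed
  have "Gfun P A w = (\<Sum>i\<in>A. w$i * KL (P i) (\<lambda>a. L a / S))"
    unfolding Gfun_def L_def S_def mixture_def block_weight_def using ne wpos by force
  also have "\<dots> = (\<Sum>i\<in>A. w$i * neg_entropy (P i))
      - (\<Sum>i\<in>A. \<Sum>a\<in>UNIV. w$i * P i a * ln (L a)) + (\<Sum>i\<in>A. w$i) * ln S"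
    by (simp add: KL_eq algebra_simps sum_distrib_left sum.distrib sum_subtractf sum_distrib_right)
  also have "(\<Sum>i\<in>A. \<Sum>a\<in>UNIV. w$i * P i a * ln (L a)) = (\<Sum>a\<in>UNIV. L a * ln (L a))"
    by (subst sum.swap) (simp add: L_def mixture_def sum_distrib_right)
  finally show ?thesis unfolding G_pos_def L_def S_def block_weight_def .
qed

lemma has_derivative_G_pos:
  assumes pos: "\<forall>j a. 0 < P j a" and ne: "A \<noteq> {}" and xpos: "\<forall>j\<in>A. 0 < x$j"
  shows "(G_pos P A has_derivative G_pos_deriv P A x) (at x)"
proof -
  have dL: "(mixture P A a has_derivative mixture P A a) (at x)" for a
    by (rule bounded_linear_imp_has_derivative[OF bounded_linear_mixture])
  have dS: "(block_weight A has_derivative block_weight A) (at x)"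
    by (rule bounded_linear_imp_has_derivative[OF bounded_linear_block_weight])
  have L: "0 < mixture P A a x" for a using mixture_pos[OF pos ne xpos] .
  have S: "0 < block_weight A x" using block_weight_pos[OF ne xpos] .
  have dLlnL: "((\<lambda>w. mixture P A a w * ln (mixture P A a w)) has_derivative
      (\<lambda>h. (ln (mixture P A a x) + 1) * mixture P A a h)) (at x)" for a
    by (rule has_derivative_eq_rhs[OF has_derivative_mult[OF dL has_derivative_ln[OF L dL]]])
      (use L[of a] in \<open>simp add: fun_eq_iff field_simps\<close>)
  have dSlnS: "((\<lambda>w. block_weight A w * ln (block_weight A w)) has_derivative
      (\<lambda>h. (ln (block_weight A x) + 1) * block_weight A h)) (at x)"
    by (rule has_derivative_eq_rhs[OF has_derivative_mult[OF dS has_derivative_ln[OF S dS]]])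
      (use S in \<open>simp add: fun_eq_iff field_simps\<close>)
  show ?thesis
    unfolding G_pos_def[abs_def] G_pos_deriv_def[abs_def]
    by (intro has_derivative_add has_derivative_diff has_derivative_sum dLlnL dSlnS
        bounded_linear_imp_has_derivative bounded_linear_sum bounded_linear_mult_const
        bounded_linear_vec_nth)
qed

lemma G_pos_linearization_gap:
  assumes "\<forall>j. (\<Sum>a\<in>UNIV. P j a) = 1"
  shows "G_pos P A x - G_pos P A y + G_pos_deriv P A x (y - x) =
    (\<Sum>a\<in>UNIV. mixture P A a y * (ln (mixture P A a y) - ln (mixture P A a x)))
      - block_weight A y * (ln (block_weight A y) - ln (block_weight A x))"
proof -
  have "(\<Sum>i\<in>A. (y - x)$i * neg_entropy (P i))
      = (\<Sum>i\<in>A. y$i * neg_entropy (P i)) - (\<Sum>i\<in>A. x$i * neg_entropy (P i))"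
    by (simp add: left_diff_distrib sum_subtractf)
  moreover have "(\<Sum>a\<in>UNIV. (ln (mixture P A a x) + 1) * mixture P A a (y - x)) =
      (\<Sum>a\<in>UNIV. ln (mixture P A a x) * (mixture P A a y - mixture P A a x))
        + (block_weight A y - block_weight A x)"
    using sum_mixture[OF assms, of A y] sum_mixture[OF assms, of A x]
    by (simp add: linear_simps_mixture_block_weight algebra_simps sum.distrib sum_subtractf)
  ultimately show ?thesis
    unfolding G_pos_def G_pos_deriv_def linear_simps_mixture_block_weight
    by (simp add: algebra_simps sum_subtractf sum.distrib)
qed

lemma Cauchy_Schwarz_weighted:
  fixes q y d :: "'k \<Rightarrow> real"
  assumes "\<forall>j\<in>A. 0 < y j"
  shows "(\<Sum>j\<in>A. d j * q j)\<^sup>2 \<le> (\<Sum>j\<in>A. (d j)\<^sup>2 / y j) * (\<Sum>j\<in>A. y j * (q j)\<^sup>2)"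
proof -
  have "(\<Sum>j\<in>A. d j * q j) = (\<Sum>j\<in>A. (d j / sqrt (y j)) * (sqrt (y j) * q j))"
    "(\<Sum>j\<in>A. (d j / sqrt (y j))\<^sup>2) = (\<Sum>j\<in>A. (d j)\<^sup>2 / y j)"
    "(\<Sum>j\<in>A. (sqrt (y j) * q j)\<^sup>2) = (\<Sum>j\<in>A. y j * (q j)\<^sup>2)"
    using assms by (auto intro!: sum.cong simp: field_simps power_divide power_mult_distrib)
  then show ?thesis
    using Cauchy_Schwarz_ineq_sum[of "\<lambda>j. d j / sqrt (y j)" "\<lambda>j. sqrt (y j) * q j" A] by simp
qed

lemma G_pos_gap_le_chi_square:
  assumes pos: "\<forall>j a. 0 < P j a" and sum1: "\<forall>j. (\<Sum>a\<in>UNIV. P j a) = 1"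
    and ne: "A \<noteq> {}" and xpos: "\<forall>j\<in>A. 0 < x$j" and ypos: "\<forall>j\<in>A. 0 < y$j"
    and y: "y = x + \<alpha> *\<^sub>R d"
  shows "G_pos P A x - G_pos P A y + G_pos_deriv P A x (y - x) \<le>
    \<alpha>\<^sup>2 * (block_weight A x * (\<Sum>a\<in>UNIV. (mixture P A a d)\<^sup>2 / mixture P A a x)) / block_weight A y"
proof -
  define Lx Ly u where "Lx a = mixture P A a x" and "Ly a = mixture P A a y"
    and "u a = mixture P A a d" for a
  define Sx Sy s where "Sx = block_weight A x" and "Sy = block_weight A y" and "s = block_weight A d"
  define U where "U = (\<Sum>a\<in>UNIV. (u a)\<^sup>2 / Lx a)"
  have Lx: "0 < Lx a" and Ly: "0 < Ly a" for a
    unfolding Lx_def Ly_def using mixture_pos[OF pos ne xpos] mixture_pos[OF pos ne ypos] by auto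
  have Sx: "0 < Sx" and Sy: "0 < Sy"
    unfolding Sx_def Sy_def using block_weight_pos[OF ne xpos] block_weight_pos[OF ne ypos] by auto
  have Ly_eq: "Ly a = Lx a + \<alpha> * u a" for a
    unfolding Ly_def Lx_def u_def y by (simp add: linear_simps_mixture_block_weight)
  have Sy_eq: "Sy = Sx + \<alpha> * s"
    unfolding Sy_def Sx_def s_def y by (simp add: linear_simps_mixture_block_weight)
  have sums: "(\<Sum>a\<in>UNIV. Lx a) = Sx" "(\<Sum>a\<in>UNIV. Ly a) = Sy" "(\<Sum>a\<in>UNIV. u a) = s"
    unfolding Lx_def Sx_def Ly_def Sy_def u_def s_def using sum_mixture[OF sum1] by auto
  have "G_pos P A x - G_pos P A y + G_pos_deriv P A x (y - x) =
      (\<Sum>a\<in>UNIV. Ly a * (ln (Ly a) - ln (Lx a))) - Sy * (ln Sy - ln Sx)"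
    unfolding Ly_def Lx_def Sy_def Sx_def by (rule G_pos_linearization_gap[OF sum1])
  also have "\<dots> = (\<Sum>a\<in>UNIV. Ly a * ln (Ly a * Sx / (Lx a * Sy)))"
  proof -
    have "ln (Ly a * Sx / (Lx a * Sy)) = (ln (Ly a) - ln (Lx a)) - (ln Sy - ln Sx)" for a
      using Lx[of a] Ly[of a] Sx Sy by (simp add: ln_div ln_mult)
    then show ?thesis
      by (simp add: right_diff_distrib sum_subtractf sum_distrib_right[symmetric] sums)
  qed
  also have "\<dots> \<le> (\<Sum>a\<in>UNIV. Ly a * (Ly a * Sx / (Lx a * Sy) - 1))"
    using Lx Ly Sx Sy
    by (intro sum_mono mult_left_mono ln_le_minus_one) (auto intro!: divide_pos_pos less_imp_le)
  also have "\<dots> = (Sx / Sy) * (\<Sum>a\<in>UNIV. (Ly a)\<^sup>2 / Lx a) - Sy"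
    using Lx Sy by (simp add: sum_subtractf sum_distrib_left sums power2_eq_square field_simps)
  also have "(\<Sum>a\<in>UNIV. (Ly a)\<^sup>2 / Lx a) = Sx + 2 * \<alpha> * s + \<alpha>\<^sup>2 * U"
  proof -
    have "(Ly a)\<^sup>2 / Lx a = Lx a + 2 * \<alpha> * u a + \<alpha>\<^sup>2 * ((u a)\<^sup>2 / Lx a)" for a
      using Lx[of a] by (simp add: Ly_eq power2_eq_square field_simps)
    then show ?thesis
      by (simp add: sum.distrib sum_distrib_left[symmetric] sums U_def
          times_divide_eq_right[symmetric] del: times_divide_eq_right)
  qed
  also have "(Sx / Sy) * (Sx + 2 * \<alpha> * s + \<alpha>\<^sup>2 * U) - Sy = \<alpha>\<^sup>2 * (Sx * U - s\<^sup>2) / Sy"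
    using Sy unfolding Sy_eq by (simp add: field_simps power2_eq_square)
  also have "\<dots> \<le> \<alpha>\<^sup>2 * (Sx * U) / Sy"
    using Sy by (intro divide_right_mono mult_left_mono) auto
  finally show ?thesis unfolding Sx_def Sy_def U_def u_def Lx_def .
qed

lemma block_weight_mul_chi_square_le:
  assumes p: "0 < p" and lo: "\<forall>j a. p \<le> P j a" and hi: "\<forall>j a. P j a \<le> 1 - p"
    and sum1: "\<forall>j. (\<Sum>a\<in>UNIV. P j a) = 1"
    and ne: "A \<noteq> {}" and xpos: "\<forall>j\<in>A. 0 < x$j" and ypos: "\<forall>j\<in>A. 0 < y$j"
  shows "block_weight A x * (\<Sum>a\<in>UNIV. (mixture P A a d)\<^sup>2 / mixture P A a x)
    \<le> block_weight A y * ((1 - p) / p) * (\<Sum>j\<in>A. (d$j)\<^sup>2 / y$j)"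
proof -
  define Q where "Q = (\<Sum>j\<in>A. (d$j)\<^sup>2 / y$j)"
  have pos: "\<forall>j a. 0 < P j a" using p lo by (meson less_le_trans)
  have Q: "0 \<le> Q" unfolding Q_def using ypos by (intro sum_nonneg) auto
  have "block_weight A x * ((mixture P A a d)\<^sup>2 / mixture P A a x)
      \<le> Q * ((1 - p) / p) * mixture P A a y" for a
  proof -
    have Lx: "0 < mixture P A a x" using mixture_pos[OF pos ne xpos] .
    have "(mixture P A a d)\<^sup>2 \<le> Q * (\<Sum>j\<in>A. y$j * (P j a)\<^sup>2)"
      unfolding mixture_def Q_def using Cauchy_Schwarz_weighted[of A "\<lambda>j. y$j"] ypos by auto
    also have "\<dots> \<le> Q * ((1 - p) * mixture P A a y)"
      unfolding mixture_def sum_distrib_left using ypos pos hi Q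
      by (intro mult_left_mono sum_mono)
        (auto simp: power2_eq_square intro!: mult_left_mono less_imp_le simp flip: mult.assoc)
    finally have num: "(mixture P A a d)\<^sup>2 \<le> Q * ((1 - p) * mixture P A a y)" .
    have "p * block_weight A x \<le> mixture P A a x"
      unfolding mixture_def block_weight_def sum_distrib_left
      using xpos lo by (intro sum_mono) (auto simp: mult.commute intro!: mult_left_mono less_imp_le)
    then have ratio: "block_weight A x / mixture P A a x \<le> 1 / p"
      using p Lx by (simp add: field_simps)
    have "block_weight A x * ((mixture P A a d)\<^sup>2 / mixture P A a x)
        = (mixture P A a d)\<^sup>2 * (block_weight A x / mixture P A a x)" by simp
    also have "\<dots> \<le> Q * ((1 - p) * mixture P A a y) * (1 / p)"
      using num ratio p block_weight_pos[OF ne xpos] Lx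
      by (intro mult_mono) (auto intro!: order_trans[OF zero_le_power2 num])
    finally show ?thesis by simp
  qed
  then have "block_weight A x * (\<Sum>a\<in>UNIV. (mixture P A a d)\<^sup>2 / mixture P A a x)
      \<le> (\<Sum>a\<in>UNIV. Q * ((1 - p) / p) * mixture P A a y)"
    by (simp add: sum_distrib_left sum_mono)
  also have "\<dots> = block_weight A y * ((1 - p) / p) * Q"
    by (simp only: sum_distrib_left[symmetric] sum_mixture[OF sum1] ac_simps)
  finally show ?thesis unfolding Q_def .
qed

lemma G_pos_gap_le:
  assumes p: "0 < p" and lo: "\<forall>j a. p \<le> P j a" and hi: "\<forall>j a. P j a \<le> 1 - p"
    and sum1: "\<forall>j. (\<Sum>a\<in>UNIV. P j a) = 1"
    and ne: "A \<noteq> {}" and xpos: "\<forall>j\<in>A. 0 < x$j" and ypos: "\<forall>j\<in>A. 0 < y$j"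
    and y: "y = x + \<alpha> *\<^sub>R d"
  shows "G_pos P A x - G_pos P A y + G_pos_deriv P A x (y - x)
    \<le> \<alpha>\<^sup>2 * ((1 - p) / p) * (\<Sum>j\<in>A. (d$j)\<^sup>2 / y$j)"
proof -
  have pos: "\<forall>j a. 0 < P j a" using p lo by (meson less_le_trans)
  have Sy: "0 < block_weight A y" using block_weight_pos[OF ne ypos] .
  have "G_pos P A x - G_pos P A y + G_pos_deriv P A x (y - x) \<le>
      \<alpha>\<^sup>2 * (block_weight A x * (\<Sum>a\<in>UNIV. (mixture P A a d)\<^sup>2 / mixture P A a x)) / block_weight A y"
    by (rule G_pos_gap_le_chi_square[OF pos sum1 ne xpos ypos y])
  also have "\<dots> \<le> \<alpha>\<^sup>2 * (block_weight A y * ((1 - p) / p) * (\<Sum>j\<in>A. (d$j)\<^sup>2 / y$j)) / block_weight A y"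
    using block_weight_mul_chi_square_le[OF p lo hi sum1 ne xpos ypos] Sy
    by (intro divide_right_mono mult_left_mono) auto
  finally show ?thesis using Sy by simp
qed

lemma has_derivative_gfun:
  fixes P :: "'k::finite \<Rightarrow> 'a::finite \<Rightarrow> real"
  assumes pos: "\<forall>j a. 0 < P j a" and sum1: "\<forall>j. (\<Sum>a\<in>UNIV. P j a) = 1"
    and ne: "{} \<notin> \<sigma>" and xpos: "\<forall>j. 0 < x$j"
  shows "(gfun P \<sigma> has_derivative (\<lambda>h. \<Sum>A\<in>\<sigma>. G_pos_deriv P A x h)) (at x)"
proof -
  define V where "V = {w::real^'k. \<forall>j. 0 < w$j}"
  have "V = (\<Inter>j. {w. 0 < w$j})" unfolding V_def by auto
  then have "open V"
    by (simp add: open_INT open_Collect_less continuous_on_component)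
  have "(Gfun P A has_derivative G_pos_deriv P A x) (at x)" if "A \<in> \<sigma>" for A
  proof (rule has_derivative_transform_within_open[OF _ \<open>open V\<close>])
    show "(G_pos P A has_derivative G_pos_deriv P A x) (at x)"
      using ne that xpos by (intro has_derivative_G_pos[OF pos]) auto
    show "x \<in> V" using xpos unfolding V_def by simp
    show "G_pos P A w = Gfun P A w" if "w \<in> V" for w
    proof -
      have "A \<noteq> {}" using ne \<open>A \<in> \<sigma>\<close> by auto
      then show ?thesis using Gfun_eq_G_pos[OF pos sum1, of A w] that unfolding V_def by simp
    qed
  qed
  then show ?thesis unfolding gfun_def[abs_def] by (intro has_derivative_sum) auto
qed

lemma simplex_gamma_bounds:
  assumes "x \<in> simplex_gamma \<gamma>" and "0 < \<gamma>"
  shows "\<gamma> \<le> x$j" and "x$j \<le> 1" and "(\<Sum>j\<in>UNIV. x$j) = 1"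
proof -
  show lo: "\<gamma> \<le> x$j" and sum: "(\<Sum>j\<in>UNIV. x$j) = 1"
    using assms by (auto simp: simplex_gamma_def)
  have "\<forall>i\<in>UNIV. 0 \<le> x$i"
    using assms by (auto simp: simplex_gamma_def intro: order_trans[OF less_imp_le])
  then have "x$j \<le> (\<Sum>j\<in>UNIV. x$j)" by (intro member_le_sum) auto
  then show "x$j \<le> 1" using sum by simp
qed

lemma sq_div_interpolant_le:
  fixes g \<alpha> s t :: real
  assumes g: "0 < g" and \<alpha>: "0 < \<alpha>" "\<alpha> \<le> 1" and s: "g \<le> s" "s \<le> 1" and t: "g \<le> t" "t \<le> 1"
  shows "(t - s)\<^sup>2 / (s + \<alpha> * (t - s)) \<le> max (t - s) 0 / (g + \<alpha>) + max (s - t) 0 / (g + 1 - \<alpha>)"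
proof -
  have key: "e\<^sup>2 / (r + \<beta> * e) \<le> e / (g + \<beta>)"
    if "0 \<le> e" "e \<le> 1" "g \<le> r" "0 \<le> \<beta>" for e r \<beta> :: real
  proof -
    have den: "0 < g + \<beta> * e" using g that by (simp add: add_pos_nonneg)
    have "e * (g + \<beta>) - (g + \<beta> * e) = (e - 1) * g" by (simp add: algebra_simps)
    moreover have "(e - 1) * g \<le> 0" using that g by (simp add: mult_nonpos_nonneg)
    ultimately have "e * (g + \<beta>) \<le> g + \<beta> * e" by linarith
    then have "e\<^sup>2 * (g + \<beta>) \<le> e * (g + \<beta> * e)"
      using that by (simp add: power2_eq_square mult.assoc mult_left_mono)
    then have "e\<^sup>2 / (g + \<beta> * e) \<le> e / (g + \<beta>)"
      using den g that by (simp add: field_simps)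
    moreover have "e\<^sup>2 / (r + \<beta> * e) \<le> e\<^sup>2 / (g + \<beta> * e)"
      using den that by (intro divide_left_mono) auto
    ultimately show ?thesis by linarith
  qed
  show ?thesis
  proof (cases "s \<le> t")
    case True
    have "(t - s)\<^sup>2 / (s + \<alpha> * (t - s)) \<le> (t - s) / (g + \<alpha>)"
      using True g s t \<alpha> by (intro key) auto
    then show ?thesis using True by (simp add: max_def)
  next
    case False
    have "(s - t)\<^sup>2 / (t + (1 - \<alpha>) * (s - t)) \<le> (s - t) / (g + (1 - \<alpha>))"
      using False g s t \<alpha> by (intro key) auto
    moreover have "s + \<alpha> * (t - s) = t + (1 - \<alpha>) * (s - t)" by (simp add: algebra_simps)
    ultimately show ?thesis using False by (simp add: max_def power2_commute add_diff_eq)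
  qed
qed

lemma inverse_sum_le_endpoints:
  fixes g \<alpha> :: real
  assumes "0 < g" and "0 \<le> \<alpha>" and "\<alpha> \<le> 1"
  shows "1 / (g + \<alpha>) + 1 / (g + 1 - \<alpha>) \<le> 1 / g + 1 / (1 + g)"
proof -
  have pos: "0 < g + \<alpha>" "0 < g + 1 - \<alpha>" using assms by auto
  have "(g + \<alpha>) * (g + 1 - \<alpha>) = g * (g + 1) + \<alpha> * (1 - \<alpha>)" by (simp add: algebra_simps)
  moreover have "0 \<le> \<alpha> * (1 - \<alpha>)" using assms by simp
  ultimately have "g * (g + 1) \<le> (g + \<alpha>) * (g + 1 - \<alpha>)" by linarith
  then have "(2 * g + 1) / ((g + \<alpha>) * (g + 1 - \<alpha>)) \<le> (2 * g + 1) / (g * (g + 1))"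
    using pos assms by (intro divide_left_mono) auto
  moreover have "1 / (g + \<alpha>) + 1 / (g + 1 - \<alpha>) = (2 * g + 1) / ((g + \<alpha>) * (g + 1 - \<alpha>))"
    using pos by (simp add: field_simps)
  moreover have "(2 * g + 1) / (g * (g + 1)) = 1 / g + 1 / (1 + g)"
    using assms by (simp add: field_simps)
  ultimately show ?thesis by simp
qed

lemma one_minus_mult_inverse_sum_le:
  fixes \<gamma> k :: real
  assumes \<gamma>: "0 < \<gamma>" and k: "1 \<le> k"
  shows "(1 - k * \<gamma>) * (1 / \<gamma> + 1 / (1 + \<gamma>)) \<le> 1 / \<gamma>"
proof -
  have "(1 - k * \<gamma>) * (1 + 2 * \<gamma>) = 1 + \<gamma> - (k - 1) * \<gamma> - 2 * k * \<gamma> * \<gamma>"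
    by (simp add: algebra_simps)
  moreover have "0 \<le> (k - 1) * \<gamma>" "0 \<le> k * \<gamma> * \<gamma>" using k \<gamma> by auto
  ultimately have "(1 - k * \<gamma>) * (1 + 2 * \<gamma>) \<le> 1 + \<gamma>" by linarith
  then have "(1 - k * \<gamma>) * (1 + 2 * \<gamma>) / (\<gamma> * (1 + \<gamma>)) \<le> (1 + \<gamma>) / (\<gamma> * (1 + \<gamma>))"
    using \<gamma> by (intro divide_right_mono) auto
  moreover have "1 / \<gamma> + 1 / (1 + \<gamma>) = (1 + 2 * \<gamma>) / (\<gamma> * (1 + \<gamma>))"
    using \<gamma> by (simp add: field_simps)
  ultimately show ?thesis using \<gamma> by simp
qed

lemma simplex_gamma_chi_square_le:
  fixes x z :: "real^'k::finite"
  assumes x: "x \<in> simplex_gamma \<gamma>" and z: "z \<in> simplex_gamma \<gamma>" and \<gamma>: "0 < \<gamma>"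
    and \<alpha>: "0 < \<alpha>" "\<alpha> \<le> 1"
  shows "(\<Sum>j\<in>UNIV. ((z - x)$j)\<^sup>2 / ((x + \<alpha> *\<^sub>R (z - x))$j)) \<le> 1 / \<gamma>"
proof -
  note xb = simplex_gamma_bounds[OF x \<gamma>] and zb = simplex_gamma_bounds[OF z \<gamma>]
  define mass where "mass = (\<Sum>j\<in>UNIV. max (z$j - x$j) 0)"
  have balance: "(\<Sum>j\<in>UNIV. max (x$j - z$j) 0) = mass"
  proof -
    have "mass - (\<Sum>j\<in>UNIV. max (x$j - z$j) 0) = (\<Sum>j\<in>UNIV. z$j - x$j)"
      unfolding mass_def sum_subtractf[symmetric] by (intro sum.cong refl) (simp add: max_def)
    also have "\<dots> = 0" using xb(3) zb(3) by (simp add: sum_subtractf)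
    finally show ?thesis by simp
  qed
  have mass: "0 \<le> mass" "mass \<le> 1 - real CARD('k) * \<gamma>"
  proof -
    show "0 \<le> mass" unfolding mass_def by (intro sum_nonneg) auto
    have "mass \<le> (\<Sum>j\<in>UNIV. z$j - \<gamma>)"
      unfolding mass_def using xb(1) zb(1) by (intro sum_mono) auto
    then show "mass \<le> 1 - real CARD('k) * \<gamma>" using zb(3) by (simp add: sum_subtractf)
  qed
  have "(\<Sum>j\<in>UNIV. ((z - x)$j)\<^sup>2 / ((x + \<alpha> *\<^sub>R (z - x))$j)) \<le>
      (\<Sum>j\<in>UNIV. max (z$j - x$j) 0 / (\<gamma> + \<alpha>) + max (x$j - z$j) 0 / (\<gamma> + 1 - \<alpha>))"
    using sq_div_interpolant_le[OF \<gamma> \<alpha> xb(1) xb(2) zb(1) zb(2)] by (intro sum_mono) simp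
  also have "\<dots> = mass * (1 / (\<gamma> + \<alpha>) + 1 / (\<gamma> + 1 - \<alpha>))"
    using balance by (simp add: mass_def sum.distrib sum_divide_distrib[symmetric] algebra_simps)
  also have "\<dots> \<le> (1 - real CARD('k) * \<gamma>) * (1 / \<gamma> + 1 / (1 + \<gamma>))"
    using inverse_sum_le_endpoints[OF \<gamma> less_imp_le[OF \<alpha>(1)] \<alpha>(2)] mass \<gamma> \<alpha>
    by (intro mult_mono) (auto intro!: add_nonneg_nonneg)
  also have "\<dots> \<le> 1 / \<gamma>"
    using \<gamma> by (intro one_minus_mult_inverse_sum_le) auto
  finally show ?thesis .
qed

lemma gfun_linearization_gap_le:
  fixes P :: "'k::finite \<Rightarrow> 'a::finite \<Rightarrow> real" and \<sigma> :: "'k set set"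
  assumes p: "0 < p" and lo: "\<forall>j a. p \<le> P j a" and hi: "\<forall>j a. P j a \<le> 1 - p"
    and sum1: "\<forall>j. (\<Sum>a\<in>UNIV. P j a) = 1"
    and disj: "\<forall>A\<in>\<sigma>. \<forall>B\<in>\<sigma>. A \<noteq> B \<longrightarrow> A \<inter> B = {}" and ne: "{} \<notin> \<sigma>"
    and \<gamma>: "0 < \<gamma>"
    and x: "x \<in> simplex_gamma \<gamma>" and z: "z \<in> simplex_gamma \<gamma>" and \<alpha>: "0 < \<alpha>" "\<alpha> \<le> 1"
    and y: "y = x + \<alpha> *\<^sub>R (z - x)"
  shows "gfun P \<sigma> x - gfun P \<sigma> y + frechet_derivative (gfun P \<sigma>) (at x) (y - x)
    \<le> \<alpha>\<^sup>2 * ((1 - p) / p) * (1 / \<gamma>)"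
proof -
  define d where "d = z - x"
  define c where "c = (1 - p) / p"
  have pos: "\<forall>j a. 0 < P j a" using p lo by (meson less_le_trans)
  have "p \<le> 1 - p" using order_trans[OF lo[rule_format] hi[rule_format]] .
  then have c: "0 \<le> c" unfolding c_def using p by simp
  note xb = simplex_gamma_bounds[OF x \<gamma>] and zb = simplex_gamma_bounds[OF z \<gamma>]
  have xpos: "\<forall>j. 0 < x$j" using xb(1) \<gamma> by (meson less_le_trans)
  have ypos: "\<forall>j. 0 < y$j"
  proof
    fix j
    have "y$j = (1 - \<alpha>) * x$j + \<alpha> * z$j" unfolding y by (simp add: algebra_simps)
    moreover have "0 \<le> (1 - \<alpha>) * x$j" using \<alpha> xpos by (simp add: less_imp_le)
    moreover have "0 < \<alpha> * z$j" using \<alpha> zb(1)[of j] \<gamma> by simp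
    ultimately show "0 < y$j" by linarith
  qed
  have gfun_eq: "gfun P \<sigma> w = (\<Sum>A\<in>\<sigma>. G_pos P A w)" if "\<forall>j. 0 < w$j" for w
    unfolding gfun_def using ne that by (intro sum.cong refl Gfun_eq_G_pos[OF pos sum1]) auto
  have "frechet_derivative (gfun P \<sigma>) (at x) = (\<lambda>h. \<Sum>A\<in>\<sigma>. G_pos_deriv P A x h)"
    by (rule frechet_derivative_at[OF has_derivative_gfun[OF pos sum1 ne xpos], symmetric])
  then have "gfun P \<sigma> x - gfun P \<sigma> y + frechet_derivative (gfun P \<sigma>) (at x) (y - x)
      = (\<Sum>A\<in>\<sigma>. G_pos P A x - G_pos P A y + G_pos_deriv P A x (y - x))"
    using gfun_eq xpos ypos by (simp add: sum.distrib sum_subtractf)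
  also have "\<dots> \<le> (\<Sum>A\<in>\<sigma>. \<alpha>\<^sup>2 * c * (\<Sum>j\<in>A. (d$j)\<^sup>2 / y$j))"
    unfolding c_def using ne xpos ypos y
    by (intro sum_mono G_pos_gap_le[OF p lo hi sum1]) (auto simp: d_def)
  also have "\<dots> = \<alpha>\<^sup>2 * c * (\<Sum>j\<in>\<Union>\<sigma>. (d$j)\<^sup>2 / y$j)"
    using sum.Union_disjoint[of \<sigma> "\<lambda>j. (d$j)\<^sup>2 / y$j"] disj by (simp add: sum_distrib_left o_def)
  also have "\<dots> \<le> \<alpha>\<^sup>2 * c * (\<Sum>j\<in>UNIV. (d$j)\<^sup>2 / y$j)"
    using c ypos by (intro mult_left_mono sum_mono2) (auto simp: less_imp_le)
  also have "\<dots> \<le> \<alpha>\<^sup>2 * c * (1 / \<gamma>)"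
    using simplex_gamma_chi_square_le[OF x z \<gamma> \<alpha>] c unfolding y d_def
    by (intro mult_left_mono) auto
  finally show ?thesis unfolding c_def .
qed

lemma curvature_gfun_le:
  fixes P :: "'k::finite \<Rightarrow> 'a::finite \<Rightarrow> real" and \<sigma> :: "'k set set"
  assumes p: "0 < p" and lo: "\<forall>j a. p \<le> P j a" and hi: "\<forall>j a. P j a \<le> 1 - p"
    and sum1: "\<forall>j. (\<Sum>a\<in>UNIV. P j a) = 1"
    and disj: "\<forall>A\<in>\<sigma>. \<forall>B\<in>\<sigma>. A \<noteq> B \<longrightarrow> A \<inter> B = {}" and ne: "{} \<notin> \<sigma>"
    and \<gamma>: "0 < \<gamma>"
  shows "curvature (gfun P \<sigma>) (simplex_gamma \<gamma>) \<le> ereal ((1 - p) / p / \<gamma>)"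
  unfolding curvature_def
proof (intro SUP_least, clarify)
  fix x z :: "real^'k" and \<alpha> :: real
  assume "x \<in> simplex_gamma \<gamma>" "z \<in> simplex_gamma \<gamma>" and \<alpha>: "0 < \<alpha>" "\<alpha> \<le> 1"
  from gfun_linearization_gap_le[OF p lo hi sum1 disj ne \<gamma> this refl]
  show "(let y = x + \<alpha> *\<^sub>R (z - x) in
      ereal ((gfun P \<sigma> x - gfun P \<sigma> y + frechet_derivative (gfun P \<sigma>) (at x) (y - x)) / \<alpha>\<^sup>2))
      \<le> ereal ((1 - p) / p / \<gamma>)"
    using \<alpha> by (simp add: Let_def divide_le_eq mult.commute)
qed

lemma p_min_le: "p_min P \<le> P j a"
proof -
  have "{P i b | i b. True} = range (case_prod P)" by auto
  then show ?thesis unfolding p_min_def by (intro Min_le) auto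
qed

lemma is_distr_le_one_minus:
  fixes q :: "'a::finite \<Rightarrow> real"
  assumes q: "is_distr q" and card: "CARD('a) \<ge> 2" and lo: "\<forall>b. m \<le> q b"
  shows "q a \<le> 1 - m"
proof -
  have "(UNIV :: 'a set) \<noteq> {a}"
  proof
    assume "(UNIV :: 'a set) = {a}"
    then have "CARD('a) = card {a}" by (rule arg_cong)
    then show False using card by simp
  qed
  then obtain b where "b \<noteq> a" by auto
  then have "q a + q b = (\<Sum>c\<in>{a, b}. q c)" by simp
  also have "\<dots> \<le> (\<Sum>c\<in>UNIV. q c)" using q by (intro sum_mono2) (auto simp: is_distr_def)
  finally show ?thesis using q lo[rule_format, of b] by (simp add: is_distr_def)
qed

lemma D_const_ge:
  fixes C :: "'k::finite set set set" and P :: "'k \<Rightarrow> 'a::finite \<Rightarrow> real"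
  assumes C: "clustering_problem C" and \<sigma>: "\<sigma> \<in> C" and card: "CARD('a) \<ge> 2"
    and p: "0 < p_min P" "p_min P \<le> 1"
  shows "(1 - p_min P) / p_min P \<le> D_const C P"
proof -
  define M where "M = Max {card A | A \<sigma>''. \<sigma>'' \<in> C \<and> A \<in> \<sigma>''}"
  have "2 \<le> M"
  proof -
    have "is_hypothesis \<sigma>" using C \<sigma> unfolding clustering_problem_def by blast
    then have "\<sigma> \<noteq> {}" and "\<forall>A\<in>\<sigma>. 2 \<le> card A" unfolding is_hypothesis_def by auto
    then obtain A where A: "A \<in> \<sigma>" "2 \<le> card A" by blast
    have "finite {card A | A \<sigma>''. \<sigma>'' \<in> C \<and> A \<in> \<sigma>''}"
      by (rule finite_subset[of _ "card ` UNIV"]) auto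
    then have "card A \<le> M" unfolding M_def using A \<sigma> by (intro Max_ge) auto
    then show ?thesis using A by simp
  qed
  then have "(2::real) * 2 \<le> real M * real CARD('a)" using card by (intro mult_mono) auto
  then have "1 * ((1 - p_min P) / p_min P) \<le> (real M * real CARD('a) / 4) * ((1 - p_min P) / p_min P)"
    using p by (intro mult_right_mono) auto
  also have "\<dots> = D_const C P"
    unfolding D_const_def M_def by (simp add: field_simps)
  finally show ?thesis by simp
qed

theorem lemma8:
  fixes C :: "'k::finite set set set" and P :: "'k \<Rightarrow> 'a::finite \<Rightarrow> real"
    and \<sigma>' :: "'k set set" and \<gamma> :: real
  assumes "CARD('k) \<ge> 2" and "CARD('a) \<ge> 2"
    and "clustering_problem C" and "assumption1 C TYPE('a)"
    and "in_Lambda_C C P" and "p_min P > 0"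
    and "\<sigma>' \<in> C" and "\<sigma>' \<noteq> sigma_of C P"
    and "0 < \<gamma>" and "\<gamma> < 1 / real CARD('k)"
  shows "curvature (gfun P \<sigma>') (simplex_gamma \<gamma>) \<le> ereal (D_const C P / \<gamma>)"
proof -
  obtain \<sigma> where "in_Lambda \<sigma> P" using assms(5) unfolding in_Lambda_C_def by blast
  then have distr: "is_distr (P j)" for j unfolding in_Lambda_def by simp
  define p where "p = p_min P"
  have lo: "\<forall>j a. p \<le> P j a" unfolding p_def by (simp add: p_min_le)
  have hi: "\<forall>j a. P j a \<le> 1 - p" using is_distr_le_one_minus[OF distr assms(2)] lo by blast
  have sum1: "\<forall>j. (\<Sum>a\<in>UNIV. P j a) = 1" using distr by (simp add: is_distr_def)
  have "is_hypothesis \<sigma>'" using assms(3,7) unfolding clustering_problem_def by blast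
  then have disj: "\<forall>A\<in>\<sigma>'. \<forall>B\<in>\<sigma>'. A \<noteq> B \<longrightarrow> A \<inter> B = {}" and ne: "{} \<notin> \<sigma>'"
    unfolding is_hypothesis_def by fastforce+
  have curv: "curvature (gfun P \<sigma>') (simplex_gamma \<gamma>) \<le> ereal ((1 - p) / p / \<gamma>)"
    using assms(6) by (intro curvature_gfun_le[OF _ lo hi sum1 disj ne assms(9)]) (simp add: p_def)
  have "p \<le> 1 - p" using order_trans[OF lo[rule_format] hi[rule_format]] .
  then have "(1 - p) / p \<le> D_const C P"
    using D_const_ge[OF assms(3,7,2)] assms(6) unfolding p_def by simp
  then have "(1 - p) / p / \<gamma> \<le> D_const C P / \<gamma>"
    using assms(9) by (intro divide_right_mono) auto
  then have "ereal ((1 - p) / p / \<gamma>) \<le> ereal (D_const C P / \<gamma>)"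
    by (simp only: ereal_less_eq(3))
  with curv show ?thesis by (rule order_trans)
qed

end
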